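(* Let $\nu>0$, $Q\sim\chi^2_\nu$, $\theta_1\in\mathbb{R}$, $\theta_2>0$, $\theta_3>0$, and $Y=\theta_1-\theta_2\log(Q)+\theta_3Q$. Then the moment generating function $E(e^{tY})$ is finite for $t<\frac12\min(\nu/\theta_2,1/\theta_3)$, and the cumulants $\kappa_j$ of $Y$ are $$\kappa_1=\theta_1-\theta_2\log 2+\nu\theta_3-\theta_2\psi^{(0)}\!\left(\tfrac{\nu}{2}\right),$$ $$\kappa_j=2^{j-1}\Gamma(j-1)\,\theta_3^{j-1}\big(-j\theta_2+(j-1)\nu\theta_3\big)+(-1)^j\theta_2^j\,\psi^{(j-1)}\!\left(\tfrac{\nu}{2}\right),\qquad j=2,3,\dots$$ In particular, the mean is $\kappa_1$, the variance is $2\theta_3(-2\theta_2+\nu\theta_3)+\theta_2^2\psi^{(1)}(\nu/2)$, the skewness $\kappa_3/\kappa_2^{3/2}$ has numerator $4\theta_3^2(-3\theta_2+2\nu\theta_3)-\theta_2^3\psi^{(2)}(\nu/2)$, and $\kappa_4/\kappa_2^2$ has numerator $16\theta_3^3(-4\theta_2+3\nu\theta_3)+\theta_2^4\psi^{(3)}(\nu/2)$.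
   Context: $\chi^2_\nu$ denotes the chi-squared distribution with $\nu$ degrees of freedom. $\psi^{(m)}$ is the polygamma function of order $m$, i.e. the $(m+1)$-th derivative of $\log\Gamma$; $\psi^{(0)}$ is the digamma function. *)

theory Defs
  imports "HOL-Probability.Probability"
begin

definition chi2_density :: "real \<Rightarrow> real \<Rightarrow> real" where
  "chi2_density \<nu> q =
     (if q > 0 then q powr (\<nu> / 2 - 1) * exp (- q / 2) / (2 powr (\<nu> / 2) * Gamma (\<nu> / 2))
      else 0)"

definition mgf :: "'a measure \<Rightarrow> ('a \<Rightarrow> real) \<Rightarrow> real \<Rightarrow> real" where
  "mgf M Y t = (\<integral>\<omega>. exp (t * Y \<omega>) \<partial>M)"

definition cgf :: "'a measure \<Rightarrow> ('a \<Rightarrow> real) \<Rightarrow> real \<Rightarrow> real" where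
  "cgf M Y t = ln (mgf M Y t)"

definition cumulant :: "'a measure \<Rightarrow> ('a \<Rightarrow> real) \<Rightarrow> nat \<Rightarrow> real" where
  "cumulant M Y j = (deriv ^^ j) (cgf M Y) 0"

end

theory Submission
  imports Defs
begin

(*
  For t < c, exp (t Y) = exp (t \<theta>1) Q^(-\<theta>2 t) exp (\<theta>3 t Q), and integrating against the
  chi-squared density gives a Gamma integral.  So the cumulant generating function on (-\<infinity>, c) is
    K t = t (\<theta>1 - \<theta>2 ln 2) + ln \<Gamma>(\<nu>/2 - \<theta>2 t) - ln \<Gamma>(\<nu>/2) - (\<nu>/2 - \<theta>2 t) ln (1 - 2 \<theta>3 t),
  whose derivatives are polygamma values plus, by Leibniz's rule for the affine factor, derivatives
  of ln (1 - 2 \<theta>3 t); evaluating them at 0 gives the cumulants.  Mean and variance are the first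
  two cumulants because the mgf may be differentiated twice under the integral sign: near t the
  integrands Y^k exp (s Y) are dominated by a multiple of exp (a Y) + exp (b Y) for a < t < b.
*)

lemma pow_le_fact_mult_exp:
  fixes x :: real
  assumes "0 \<le> x"
  shows "x ^ k \<le> fact k * exp x"
proof -
  have "(\<lambda>n. x ^ n / fact n) sums exp x"
    using exp_converges[of x] by (simp add: divide_inverse mult.commute)
  hence "(\<Sum>n\<in>{k}. x ^ n / fact n) \<le> exp x"
    using assms by (intro sums_le[OF _ sums_If_finite_set]) (auto simp: sums_iff)
  thus ?thesis by (simp add: divide_le_eq mult.commute)
qed

lemma exp_plus_abs_le_exp_add_exp:
  fixes a b s d y :: real
  assumes "a \<le> s - d" "s + d \<le> b"
  shows "exp (s * y + d * \<bar>y\<bar>) \<le> exp (a * y) + exp (b * y)"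
proof (cases "y \<ge> 0")
  case True
  hence "(s + d) * y \<le> b * y" using assms by (intro mult_right_mono) auto
  hence "s * y + d * \<bar>y\<bar> \<le> b * y" using True by (simp add: algebra_simps)
  thus ?thesis by (simp add: add_increasing)
next
  case False
  hence "(s - d) * y \<le> a * y" using assms by (intro mult_right_mono_neg) auto
  hence "s * y + d * \<bar>y\<bar> \<le> a * y" using False by (simp add: algebra_simps)
  thus ?thesis by (simp add: add_increasing2)
qed

lemma abs_pow_mult_exp_le:
  fixes a b s d y :: real
  assumes "0 < d" "a \<le> s - 2 * d" "s + 2 * d \<le> b"
  shows "\<bar>y\<bar> ^ k * exp (s * y + d * \<bar>y\<bar>) \<le> fact k / d ^ k * (exp (a * y) + exp (b * y))"
proof -
  have "\<bar>y\<bar> ^ k = (d * \<bar>y\<bar>) ^ k / d ^ k" using assms(1) by (simp add: power_mult_distrib)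
  also have "\<dots> \<le> fact k * exp (d * \<bar>y\<bar>) / d ^ k"
    using assms(1) by (intro divide_right_mono pow_le_fact_mult_exp) auto
  finally have "\<bar>y\<bar> ^ k * exp (s * y + d * \<bar>y\<bar>)
      \<le> fact k * exp (d * \<bar>y\<bar>) / d ^ k * exp (s * y + d * \<bar>y\<bar>)"
    by (rule mult_right_mono) simp
  also have "\<dots> = fact k / d ^ k * exp (s * y + 2 * d * \<bar>y\<bar>)"
    by (simp add: ac_simps exp_add[symmetric])
  also have "\<dots> \<le> fact k / d ^ k * (exp (a * y) + exp (b * y))"
    using assms exp_plus_abs_le_exp_add_exp[of a s "2 * d" b y] by (intro mult_left_mono) auto
  finally show ?thesis .
qed

lemma abs_exp_minus_one_le: "\<bar>exp x - 1\<bar> \<le> \<bar>x::real\<bar> * exp \<bar>x\<bar>"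
proof (cases "x \<ge> 0")
  case True
  have "exp x - 1 \<le> x * exp x"
    using exp_ge_add_one_self[of "-x"] by (simp add: exp_minus field_simps)
  thus ?thesis using True by auto
next
  case False
  have "1 - exp x \<le> - x" using exp_ge_add_one_self[of x] by linarith
  also have "\<dots> \<le> - x * exp \<bar>x\<bar>" using False by (simp add: mult_le_cancel_left1)
  finally show ?thesis using False by (simp add: abs_if)
qed

lemma integrable_pow_mult_exp:
  fixes Y :: "'a \<Rightarrow> real"
  assumes [measurable]: "Y \<in> borel_measurable M" and "a < s" "s < b"
    and "integrable M (\<lambda>\<omega>. exp (a * Y \<omega>))" "integrable M (\<lambda>\<omega>. exp (b * Y \<omega>))"
  shows "integrable M (\<lambda>\<omega>. Y \<omega> ^ k * exp (s * Y \<omega>))"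
proof -
  define d where "d = min (s - a) (b - s) / 2"
  have d: "0 < d" "a \<le> s - 2 * d" "s + 2 * d \<le> b" using assms(2,3) by (auto simp: d_def)
  show ?thesis
  proof (rule Bochner_Integration.integrable_bound)
    show "integrable M (\<lambda>\<omega>. fact k / d ^ k * (exp (a * Y \<omega>) + exp (b * Y \<omega>)))"
      using assms(4,5) by auto
    show "AE \<omega> in M. norm (Y \<omega> ^ k * exp (s * Y \<omega>))
                      \<le> norm (fact k / d ^ k * (exp (a * Y \<omega>) + exp (b * Y \<omega>)))"
    proof (intro AE_I2)
      fix \<omega>
      have "norm (Y \<omega> ^ k * exp (s * Y \<omega>)) \<le> \<bar>Y \<omega>\<bar> ^ k * exp (s * Y \<omega> + d * \<bar>Y \<omega>\<bar>)"
        using d by (simp add: abs_mult power_abs mult_left_mono)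
      also have "\<dots> \<le> fact k / d ^ k * (exp (a * Y \<omega>) + exp (b * Y \<omega>))"
        by (rule abs_pow_mult_exp_le[OF d])
      finally show "norm (Y \<omega> ^ k * exp (s * Y \<omega>))
                      \<le> norm (fact k / d ^ k * (exp (a * Y \<omega>) + exp (b * Y \<omega>)))"
        using d(1) by simp
    qed
  qed measurable
qed

lemma abs_pow_mult_exp_quotient_le:
  fixes a b s t d y :: real
  assumes d: "0 < d" "a \<le> t - 2 * d" "t + 2 * d \<le> b" and s: "s \<noteq> t" "\<bar>s - t\<bar> < d"
  shows "\<bar>y ^ k * ((exp (s * y) - exp (t * y)) / (s - t))\<bar>
           \<le> fact (Suc k) / d ^ Suc k * (exp (a * y) + exp (b * y))"
proof -
  define h where "h = s - t"
  have h: "h \<noteq> 0" "\<bar>h\<bar> < d" using s by (simp_all add: h_def)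
  have "s * y = t * y + h * y" by (simp add: h_def algebra_simps)
  hence "exp (s * y) - exp (t * y) = exp (t * y) * (exp (h * y) - 1)"
    by (simp add: exp_add right_diff_distrib)
  hence "\<bar>y ^ k * ((exp (s * y) - exp (t * y)) / (s - t))\<bar>
      = \<bar>y\<bar> ^ k * exp (t * y) * (\<bar>exp (h * y) - 1\<bar> / \<bar>h\<bar>)"
    by (simp add: h_def[symmetric] abs_mult power_abs)
  also have "\<dots> \<le> \<bar>y\<bar> ^ k * exp (t * y) * (\<bar>y\<bar> * exp (d * \<bar>y\<bar>))"
  proof (intro mult_left_mono)
    have "\<bar>exp (h * y) - 1\<bar> \<le> \<bar>h\<bar> * (\<bar>y\<bar> * exp (\<bar>h\<bar> * \<bar>y\<bar>))"
      using abs_exp_minus_one_le[of "h * y"] by (simp add: abs_mult)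
    also have "\<dots> \<le> \<bar>h\<bar> * (\<bar>y\<bar> * exp (d * \<bar>y\<bar>))"
      using h by (intro mult_left_mono mult_right_mono) (auto intro: mult_right_mono)
    finally show "\<bar>exp (h * y) - 1\<bar> / \<bar>h\<bar> \<le> \<bar>y\<bar> * exp (d * \<bar>y\<bar>)"
      using h by (simp add: divide_le_eq mult.commute)
  qed auto
  also have "\<dots> = \<bar>y\<bar> ^ Suc k * exp (t * y + d * \<bar>y\<bar>)"
    by (simp add: exp_add)
  also have "\<dots> \<le> fact (Suc k) / d ^ Suc k * (exp (a * y) + exp (b * y))"
    by (rule abs_pow_mult_exp_le[OF d])
  finally show ?thesis .
qed

lemma integral_dominated_convergence_at_within:
  fixes f :: "'b :: first_countable_topology \<Rightarrow> 'a \<Rightarrow> 'c :: {banach, second_countable_topology}"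
    and g :: "'a \<Rightarrow> 'c" and w :: "'a \<Rightarrow> real"
  assumes "\<And>s. f s \<in> borel_measurable M" and "g \<in> borel_measurable M" and "integrable M w"
    and "\<And>s. s \<in> S - {t} \<Longrightarrow> AE \<omega> in M. norm (f s \<omega>) \<le> w \<omega>"
    and "AE \<omega> in M. ((\<lambda>s. f s \<omega>) \<longlongrightarrow> g \<omega>) (at t within S)"
  shows "((\<lambda>s. \<integral>\<omega>. f s \<omega> \<partial>M) \<longlongrightarrow> (\<integral>\<omega>. g \<omega> \<partial>M)) (at t within S)"
  unfolding tendsto_at_iff_sequentially comp_def
proof (intro allI impI)
  fix X assume X: "\<forall>i. X i \<in> S - {t}" "X \<longlonglongrightarrow> t"
  show "(\<lambda>i. \<integral>\<omega>. f (X i) \<omega> \<partial>M) \<longlonglongrightarrow> (\<integral>\<omega>. g \<omega> \<partial>M)"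
  proof (rule integral_dominated_convergence[OF assms(2,1,3)])
    show "AE \<omega> in M. (\<lambda>i. f (X i) \<omega>) \<longlonglongrightarrow> g \<omega>"
      using assms(5)
      by eventually_elim (use X in \<open>unfold tendsto_at_iff_sequentially comp_def, blast\<close>)
    show "AE \<omega> in M. norm (f (X i) \<omega>) \<le> w \<omega>" for i
      using X(1) by (intro assms(4)) blast
  qed
qed

lemma has_real_derivative_integral_pow_mult_exp:
  fixes Y :: "'a \<Rightarrow> real"
  assumes [measurable]: "Y \<in> borel_measurable M" and "a < t" "t < b"
    and ia: "integrable M (\<lambda>\<omega>. exp (a * Y \<omega>))" and ib: "integrable M (\<lambda>\<omega>. exp (b * Y \<omega>))"
  shows "((\<lambda>s. \<integral>\<omega>. Y \<omega> ^ k * exp (s * Y \<omega>) \<partial>M)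
           has_real_derivative (\<integral>\<omega>. Y \<omega> ^ Suc k * exp (t * Y \<omega>) \<partial>M)) (at t)"
proof -
  define d where "d = min (t - a) (b - t) / 2"
  have d: "0 < d" "a \<le> t - 2 * d" "t + 2 * d \<le> b" using assms(2,3) by (auto simp: d_def)
  define q where "q s \<omega> = Y \<omega> ^ k * ((exp (s * Y \<omega>) - exp (t * Y \<omega>)) / (s - t))" for s \<omega>
  have int: "integrable M (\<lambda>\<omega>. Y \<omega> ^ k * exp (s * Y \<omega>))" if "s \<in> ball t d" for s
    using that d by (intro integrable_pow_mult_exp[OF _ _ _ ia ib]) (auto simp: dist_real_def)
  have quotient: "((\<integral>\<omega>. Y \<omega> ^ k * exp (s * Y \<omega>) \<partial>M) - (\<integral>\<omega>. Y \<omega> ^ k * exp (t * Y \<omega>) \<partial>M)) / (s - t)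
      = (\<integral>\<omega>. q s \<omega> \<partial>M)" if "s \<in> ball t d" for s
  proof -
    have "(\<integral>\<omega>. Y \<omega> ^ k * exp (s * Y \<omega>) \<partial>M) - (\<integral>\<omega>. Y \<omega> ^ k * exp (t * Y \<omega>) \<partial>M)
        = (\<integral>\<omega>. Y \<omega> ^ k * exp (s * Y \<omega>) - Y \<omega> ^ k * exp (t * Y \<omega>) \<partial>M)"
      by (rule Bochner_Integration.integral_diff[symmetric, OF int[OF that] int]) (use d(1) in simp)
    also have "\<dots> / (s - t) = (\<integral>\<omega>. (Y \<omega> ^ k * exp (s * Y \<omega>) - Y \<omega> ^ k * exp (t * Y \<omega>)) / (s - t) \<partial>M)"
      by (rule integral_divide_zero[symmetric])
    also have "\<dots> = (\<integral>\<omega>. q s \<omega> \<partial>M)"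
      by (intro Bochner_Integration.integral_cong) (simp_all add: q_def right_diff_distrib)
    finally show ?thesis by simp
  qed
  have "((\<lambda>s. \<integral>\<omega>. q s \<omega> \<partial>M) \<longlongrightarrow> (\<integral>\<omega>. Y \<omega> ^ Suc k * exp (t * Y \<omega>) \<partial>M)) (at t within ball t d)"
  proof (rule integral_dominated_convergence_at_within)
    show "integrable M (\<lambda>\<omega>. fact (Suc k) / d ^ Suc k * (exp (a * Y \<omega>) + exp (b * Y \<omega>)))"
      using ia ib by auto
    show "AE \<omega> in M. norm (q s \<omega>) \<le> fact (Suc k) / d ^ Suc k * (exp (a * Y \<omega>) + exp (b * Y \<omega>))"
      if "s \<in> ball t d - {t}" for s
    proof (intro AE_I2)
      fix \<omega>
      have "s \<noteq> t" "\<bar>s - t\<bar> < d" using that by (auto simp: dist_real_def abs_minus_commute)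
      thus "norm (q s \<omega>) \<le> fact (Suc k) / d ^ Suc k * (exp (a * Y \<omega>) + exp (b * Y \<omega>))"
        unfolding q_def real_norm_def by (rule abs_pow_mult_exp_quotient_le[OF d])
    qed
    show "AE \<omega> in M. ((\<lambda>s. q s \<omega>) \<longlongrightarrow> Y \<omega> ^ Suc k * exp (t * Y \<omega>)) (at t within ball t d)"
    proof (intro AE_I2)
      fix \<omega>
      have "((\<lambda>s. exp (s * Y \<omega>)) has_real_derivative Y \<omega> * exp (t * Y \<omega>)) (at t)"
        by (auto intro!: derivative_eq_intros)
      hence "((\<lambda>s. (exp (s * Y \<omega>) - exp (t * Y \<omega>)) / (s - t)) \<longlongrightarrow> Y \<omega> * exp (t * Y \<omega>)) (at t)"
        by (simp add: has_field_derivative_iff)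
      from tendsto_mult_left[OF this, of "Y \<omega> ^ k"]
      have "((\<lambda>s. q s \<omega>) \<longlongrightarrow> Y \<omega> ^ Suc k * exp (t * Y \<omega>)) (at t)"
        unfolding q_def by (simp add: mult_ac)
      thus "((\<lambda>s. q s \<omega>) \<longlongrightarrow> Y \<omega> ^ Suc k * exp (t * Y \<omega>)) (at t within ball t d)"
        by (rule tendsto_within_subset) simp
    qed
    show "q s \<in> borel_measurable M" for s
      unfolding q_def by measurable
  qed measurable
  hence "((\<lambda>s. \<integral>\<omega>. q s \<omega> \<partial>M) \<longlongrightarrow> (\<integral>\<omega>. Y \<omega> ^ Suc k * exp (t * Y \<omega>) \<partial>M)) (at t)"
    using at_within_open[of t "ball t d"] d(1) by simp
  moreover have "\<forall>\<^sub>F s in at t. s \<in> ball t d"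
    using d(1) by (intro eventually_at_in_open') auto
  hence "\<forall>\<^sub>F s in at t. (\<integral>\<omega>. q s \<omega> \<partial>M)
      = ((\<integral>\<omega>. Y \<omega> ^ k * exp (s * Y \<omega>) \<partial>M) - (\<integral>\<omega>. Y \<omega> ^ k * exp (t * Y \<omega>) \<partial>M)) / (s - t)"
    by eventually_elim (simp add: quotient)
  ultimately show ?thesis
    unfolding has_field_derivative_iff by (rule Lim_transform_eventually)
qed

lemma higher_deriv_eq_on_open:
  fixes f :: "real \<Rightarrow> real" and F :: "nat \<Rightarrow> real \<Rightarrow> real"
  assumes "open S" and "\<And>t. t \<in> S \<Longrightarrow> f t = F 0 t"
    and "\<And>j t. t \<in> S \<Longrightarrow> (F j has_real_derivative F (Suc j) t) (at t)"
  shows "t \<in> S \<Longrightarrow> (deriv ^^ j) f t = F j t"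
proof (induction j arbitrary: t)
  case 0
  thus ?case using assms(2) by simp
next
  case (Suc j)
  have "\<forall>\<^sub>F s in nhds t. (deriv ^^ j) f s = F j s"
    using eventually_nhds_in_open[OF assms(1) Suc.prems] by eventually_elim (use Suc.IH in blast)
  hence "deriv ((deriv ^^ j) f) t = deriv (F j) t" by (rule deriv_cong_ev) simp
  thus ?case using DERIV_imp_deriv[OF assms(3)[OF Suc.prems]] by simp
qed

lemma higher_deriv_has_derivative_on_open:
  fixes f :: "real \<Rightarrow> real" and F :: "nat \<Rightarrow> real \<Rightarrow> real"
  assumes "open S" and "\<And>t. t \<in> S \<Longrightarrow> f t = F 0 t"
    and "\<And>j t. t \<in> S \<Longrightarrow> (F j has_real_derivative F (Suc j) t) (at t)"
    and "t \<in> S"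
  shows "((deriv ^^ j) f has_real_derivative F (Suc j) t) (at t)"
proof -
  have "\<forall>\<^sub>F s in nhds t. (deriv ^^ j) f s = F j s"
    using eventually_nhds_in_open[OF assms(1,4)]
    by eventually_elim (rule higher_deriv_eq_on_open[OF assms(1-3)])
  thus ?thesis using assms(3)[OF assms(4)] by (subst DERIV_cong_ev) auto
qed

lemma (in prob_space) integral_exp_pos:
  fixes f :: "'a \<Rightarrow> real"
  assumes "integrable M (\<lambda>\<omega>. exp (f \<omega>))"
  shows "(\<integral>\<omega>. exp (f \<omega>) \<partial>M) > 0"
proof -
  have "\<not> (AE \<omega> in M. exp (f \<omega>) = 0)" using AE_False by simp
  moreover have "(\<integral>\<omega>. exp (f \<omega>) \<partial>M) = 0 \<longleftrightarrow> (AE \<omega> in M. exp (f \<omega>) = 0)"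
    by (rule integral_nonneg_eq_0_iff_AE[OF assms]) simp
  moreover have "(\<integral>\<omega>. exp (f \<omega>) \<partial>M) \<ge> 0" by simp
  ultimately show ?thesis by linarith
qed

lemma (in prob_space) cumulants_1_2_eq_moments:
  fixes Y :: "'a \<Rightarrow> real"
  assumes [measurable]: "Y \<in> borel_measurable M" and "r > 0"
    and integrable_exp: "\<And>t. \<bar>t\<bar> < r \<Longrightarrow> integrable M (\<lambda>\<omega>. exp (t * Y \<omega>))"
  shows "cumulant M Y 1 = expectation Y" and "cumulant M Y 2 = variance Y"
proof -
  define m where "m k t = (\<integral>\<omega>. Y \<omega> ^ k * exp (t * Y \<omega>) \<partial>M)" for k t
  define S where "S = {t. \<bar>t\<bar> < r}"
  have S: "open S" "0 \<in> S"
    using \<open>r > 0\<close> by (auto simp: S_def intro!: open_Collect_less continuous_intros)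
  have m_deriv: "(m k has_real_derivative m (Suc k) t) (at t)" if "t \<in> S" for k t
  proof -
    define b where "b = (\<bar>t\<bar> + r) / 2"
    have "- b < t" "t < b" "\<bar>b\<bar> < r" "\<bar>- b\<bar> < r"
      using that \<open>r > 0\<close> by (auto simp: S_def b_def abs_if field_simps)
    thus ?thesis
      unfolding m_def[abs_def]
      by (intro has_real_derivative_integral_pow_mult_exp integrable_exp) auto
  qed
  have m0_pos: "m 0 t > 0" if "t \<in> S" for t
    using integral_exp_pos[OF integrable_exp, of t] that by (simp add: m_def S_def)
  have cgf_eq: "cgf M Y = (\<lambda>t. ln (m 0 t))" by (simp add: fun_eq_iff cgf_def mgf_def m_def)
  have cgf_deriv: "deriv (cgf M Y) t = m 1 t / m 0 t" if "t \<in> S" for t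
    unfolding cgf_eq using m_deriv[OF that, of 0] m0_pos[OF that]
    by (intro DERIV_imp_deriv) (auto intro!: derivative_eq_intros)
  have "\<forall>\<^sub>F t in nhds 0. deriv (cgf M Y) t = m 1 t / m 0 t"
    using eventually_nhds_in_open[OF S] by eventually_elim (rule cgf_deriv)
  hence "deriv (deriv (cgf M Y)) 0 = deriv (\<lambda>t. m 1 t / m 0 t) 0" by (rule deriv_cong_ev) simp
  also have "\<dots> = (m 2 0 * m 0 0 - m 1 0 * m 1 0) / (m 0 0 * m 0 0)"
    using m_deriv[OF S(2), of 0] m_deriv[OF S(2), of 1] m0_pos[OF S(2)]
    by (intro DERIV_imp_deriv) (auto intro!: derivative_eq_intros simp: numeral_2_eq_2)
  finally have cgf_deriv2:
      "deriv (deriv (cgf M Y)) 0 = expectation (\<lambda>\<omega>. (Y \<omega>)\<^sup>2) - (expectation Y)\<^sup>2"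
    by (simp add: m_def power2_eq_square prob_space)
  show "cumulant M Y 1 = expectation Y"
    using cgf_deriv[OF S(2)] by (simp add: cumulant_def m_def prob_space)
  have "integrable M (\<lambda>\<omega>. Y \<omega> ^ k * exp (0 * Y \<omega>))" for k
    using \<open>r > 0\<close> by (intro integrable_pow_mult_exp[of _ _ "- r / 2" _ "r / 2"] integrable_exp) auto
  from this[of 1] this[of 2] have "integrable M Y" "integrable M (\<lambda>\<omega>. (Y \<omega>)\<^sup>2)" by simp_all
  moreover have "cumulant M Y 2 = deriv (deriv (cgf M Y)) 0"
    by (simp add: cumulant_def numeral_2_eq_2)
  ultimately show "cumulant M Y 2 = variance Y" using cgf_deriv2 by (simp add: variance_eq)
qed

lemma has_bochner_integral_powr_mult_exp:
  fixes s b :: real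
  assumes s: "s > 0" and b: "b > 0"
  shows "has_bochner_integral lborel (\<lambda>q. indicator {0..} q * q powr (s - 1) * exp (- b * q))
           (Gamma s / b powr s)"
proof (rule has_bochner_integral_nn_integral)
  define f where "f q = indicator {0..} q * q powr (s - 1) * exp (- b * q)" for q :: real
  have "ennreal (Gamma s) = (\<integral>\<^sup>+t. ennreal (indicator {0..} t * t powr (s - 1) / exp t) \<partial>lborel)"
    by (rule Gamma_conv_nn_integral_real[OF s])
  also have "\<dots> = ennreal b *
      (\<integral>\<^sup>+q. ennreal (indicator {0..} (b * q) * (b * q) powr (s - 1) / exp (b * q)) \<partial>lborel)"
    using nn_integral_real_affine[where c = b and t = 0
        and f = "\<lambda>t. ennreal (indicator {0..} t * t powr (s - 1) / exp t)"] b by simp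
  also have "\<dots> = ennreal b * (\<integral>\<^sup>+q. ennreal (b powr (s - 1)) * ennreal (f q) \<partial>lborel)"
    using b by (intro arg_cong2[where f = "(*)"] nn_integral_cong refl)
      (auto simp: f_def indicator_def ennreal_mult'[symmetric] powr_mult exp_minus field_simps
        zero_le_mult_iff)
  also have "\<dots> = ennreal b * ennreal (b powr (s - 1)) * (\<integral>\<^sup>+q. ennreal (f q) \<partial>lborel)"
    by (subst nn_integral_cmult) (auto simp: f_def mult.assoc)
  also have "ennreal b * ennreal (b powr (s - 1)) = ennreal (b powr s)"
    using b by (simp add: ennreal_mult[symmetric] powr_mult_base)
  finally have "ennreal (Gamma s) = ennreal (b powr s) * (\<integral>\<^sup>+q. ennreal (f q) \<partial>lborel)" .
  hence "ennreal (1 / b powr s) * ennreal (Gamma s) = (\<integral>\<^sup>+q. ennreal (f q) \<partial>lborel)"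
    using b by (simp add: mult.assoc[symmetric] ennreal_mult[symmetric])
  thus "(\<integral>\<^sup>+q. ennreal (f q) \<partial>lborel) = ennreal (Gamma s / b powr s)"
    using b s by (simp add: ennreal_mult[symmetric])
  show "0 \<le> Gamma s / b powr s" using s b by simp
qed (auto simp: indicator_def)

lemma chi2_integral_exp_ln_linear:
  fixes Q :: "'a \<Rightarrow> real"
  assumes D: "distributed M lborel Q (\<lambda>q. ennreal (chi2_density \<nu> q))"
    and "\<nu> > 0" and "\<nu> / 2 + \<alpha> > 0" and "\<beta> < 1 / 2"
  shows "integrable M (\<lambda>\<omega>. exp (\<alpha> * ln (Q \<omega>) + \<beta> * Q \<omega>))"
    and "(\<integral>\<omega>. exp (\<alpha> * ln (Q \<omega>) + \<beta> * Q \<omega>) \<partial>M)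
           = 2 powr \<alpha> * Gamma (\<nu> / 2 + \<alpha>) / (Gamma (\<nu> / 2) * (1 - 2 * \<beta>) powr (\<nu> / 2 + \<alpha>))"
proof -
  define g where "g q = exp (\<alpha> * ln q + \<beta> * q)" for q :: real
  define s b where "s = \<nu> / 2 + \<alpha>" and "b = 1 / 2 - \<beta>"
  define C where "C = 1 / (2 powr (\<nu> / 2) * Gamma (\<nu> / 2))"
  have s: "s > 0" and b: "b > 0" using assms by (simp_all add: s_def b_def)
  have [measurable]: "g \<in> borel_measurable lborel" unfolding g_def by measurable
  have nonneg: "0 \<le> chi2_density \<nu> q" for q
    using assms(2) by (simp add: chi2_density_def)
  have density:
      "chi2_density \<nu> q * g q = C * (indicator {0..} q * q powr (s - 1) * exp (- b * q))" for q
  proof (cases "q > 0")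
    case True
    have "q powr (s - 1) = q powr (\<nu> / 2 - 1) * exp (\<alpha> * ln q)"
      using True by (simp add: s_def powr_def exp_add[symmetric] algebra_simps)
    moreover have "exp (- b * q) = exp (- q / 2) * exp (\<beta> * q)"
      by (simp add: b_def exp_add[symmetric] algebra_simps)
    ultimately show ?thesis
      using True by (simp add: chi2_density_def C_def g_def exp_add)
  qed (auto simp: chi2_density_def)
  have HB: "has_bochner_integral lborel (\<lambda>q. chi2_density \<nu> q * g q) (C * (Gamma s / b powr s))"
    unfolding density
    by (intro has_bochner_integral_mult_right has_bochner_integral_powr_mult_exp s b)
  show "integrable M (\<lambda>\<omega>. exp (\<alpha> * ln (Q \<omega>) + \<beta> * Q \<omega>))"
    using distributed_integrable[OF D, of g] HB nonneg by (simp add: g_def has_bochner_integral_iff)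
  have "(\<integral>\<omega>. exp (\<alpha> * ln (Q \<omega>) + \<beta> * Q \<omega>) \<partial>M) = C * (Gamma s / b powr s)"
    using distributed_integral[OF D, of g] HB nonneg by (simp add: g_def has_bochner_integral_iff)
  also have "b powr s = (1 - 2 * \<beta>) powr s / 2 powr s"
    using assms(4) powr_divide[of "1 - 2 * \<beta>" 2 s] by (simp add: b_def diff_divide_distrib)
  also have "2 powr s = 2 powr (\<nu> / 2) * 2 powr \<alpha>"
    by (simp add: s_def powr_add)
  finally show "(\<integral>\<omega>. exp (\<alpha> * ln (Q \<omega>) + \<beta> * Q \<omega>) \<partial>M)
           = 2 powr \<alpha> * Gamma (\<nu> / 2 + \<alpha>) / (Gamma (\<nu> / 2) * (1 - 2 * \<beta>) powr (\<nu> / 2 + \<alpha>))"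
    using assms(2) by (simp add: C_def s_def field_simps)
qed

definition ln_Gamma_deriv :: "nat \<Rightarrow> real \<Rightarrow> real" where
  "ln_Gamma_deriv j x = (if j = 0 then ln_Gamma x else Polygamma (j - 1) x)"

lemma has_real_derivative_ln_Gamma_deriv:
  assumes "x > 0"
  shows "(ln_Gamma_deriv j has_real_derivative ln_Gamma_deriv (Suc j) x) (at x)"
proof -
  have "x \<notin> \<int>\<^sub>\<le>\<^sub>0" using assms by (auto elim!: nonpos_Ints_cases)
  thus ?thesis
    using assms unfolding ln_Gamma_deriv_def[abs_def]
    by (cases j) (auto intro: has_field_derivative_ln_Gamma_real has_field_derivative_Polygamma)
qed

definition ln_one_minus_deriv :: "real \<Rightarrow> nat \<Rightarrow> real \<Rightarrow> real" where
  "ln_one_minus_deriv a j t =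
     (if j = 0 then ln (1 - a * t) else - fact (j - 1) * (a / (1 - a * t)) ^ j)"

lemma has_real_derivative_ln_one_minus_deriv:
  assumes "a * t < 1"
  shows "(ln_one_minus_deriv a j has_real_derivative ln_one_minus_deriv a (Suc j) t) (at t)"
proof (cases j)
  case 0
  thus ?thesis
    using assms unfolding ln_one_minus_deriv_def[abs_def]
    by (auto intro!: derivative_eq_intros simp: field_simps)
next
  case (Suc m)
  have "1 - a * t \<noteq> 0" using assms by simp
  hence "((\<lambda>t. a / (1 - a * t)) has_real_derivative (a / (1 - a * t)) ^ 2) (at t)"
    by (auto intro!: derivative_eq_intros simp: power2_eq_square field_simps)
  from DERIV_cmult[OF DERIV_power[OF this, of "Suc m"], of "- fact m"]
  have "((\<lambda>t. - fact m * (a / (1 - a * t)) ^ Suc m) has_real_derivative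
           - fact (Suc m) * (a / (1 - a * t)) ^ Suc (Suc m)) (at t)"
    by (rule DERIV_cong) (simp add: fact_Suc power2_eq_square algebra_simps)
  thus ?thesis by (simp add: Suc ln_one_minus_deriv_def[abs_def])
qed

definition chi2_loglin_cgf :: "real \<Rightarrow> real \<Rightarrow> real \<Rightarrow> real \<Rightarrow> real \<Rightarrow> real" where
  "chi2_loglin_cgf \<nu> \<theta>1 \<theta>2 \<theta>3 t =
     t * (\<theta>1 - \<theta>2 * ln 2) + ln_Gamma (\<nu> / 2 - \<theta>2 * t) - ln_Gamma (\<nu> / 2)
     - (\<nu> / 2 - \<theta>2 * t) * ln (1 - 2 * \<theta>3 * t)"

(* The last two summands are Leibniz's rule for the product (\<nu>/2 - \<theta>2 t) ln (1 - 2 \<theta>3 t). *)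
definition chi2_loglin_cgf_deriv :: "real \<Rightarrow> real \<Rightarrow> real \<Rightarrow> real \<Rightarrow> nat \<Rightarrow> real \<Rightarrow> real" where
  "chi2_loglin_cgf_deriv \<nu> \<theta>1 \<theta>2 \<theta>3 j t =
     (if j = 0 then t * (\<theta>1 - \<theta>2 * ln 2) - ln_Gamma (\<nu> / 2)
      else if j = 1 then \<theta>1 - \<theta>2 * ln 2 else 0)
     + (- \<theta>2) ^ j * ln_Gamma_deriv j (\<nu> / 2 - \<theta>2 * t)
     - (\<nu> / 2 - \<theta>2 * t) * ln_one_minus_deriv (2 * \<theta>3) j t
     + real j * \<theta>2 * ln_one_minus_deriv (2 * \<theta>3) (j - 1) t"

lemma chi2_loglin_cgf_deriv_0: "chi2_loglin_cgf_deriv \<nu> \<theta>1 \<theta>2 \<theta>3 0 = chi2_loglin_cgf \<nu> \<theta>1 \<theta>2 \<theta>3"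
  by (simp add: fun_eq_iff chi2_loglin_cgf_deriv_def chi2_loglin_cgf_def ln_Gamma_deriv_def
      ln_one_minus_deriv_def)

lemma has_real_derivative_chi2_loglin_cgf_deriv:
  assumes "\<theta>2 * t < \<nu> / 2" and "2 * \<theta>3 * t < 1"
  shows "(chi2_loglin_cgf_deriv \<nu> \<theta>1 \<theta>2 \<theta>3 j has_real_derivative
           chi2_loglin_cgf_deriv \<nu> \<theta>1 \<theta>2 \<theta>3 (Suc j) t) (at t)"
proof -
  note L = has_real_derivative_ln_one_minus_deriv[of "2 * \<theta>3" t, OF assms(2)]
  have G: "((\<lambda>t. ln_Gamma_deriv j (\<nu> / 2 - \<theta>2 * t)) has_real_derivative
             ln_Gamma_deriv (Suc j) (\<nu> / 2 - \<theta>2 * t) * (- \<theta>2)) (at t)"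
    using assms(1)
    by (intro DERIV_chain2[OF has_real_derivative_ln_Gamma_deriv])
       (auto intro!: derivative_eq_intros)
  have P: "((\<lambda>t. if j = 0 then t * (\<theta>1 - \<theta>2 * ln 2) - ln_Gamma (\<nu> / 2)
                 else if j = 1 then \<theta>1 - \<theta>2 * ln 2 else 0) has_real_derivative
             (if j = 0 then \<theta>1 - \<theta>2 * ln 2 else 0)) (at t)"
    by (cases "j = 0") (auto intro!: derivative_eq_intros)
  have U: "((\<lambda>t. \<nu> / 2 - \<theta>2 * t) has_real_derivative - \<theta>2) (at t)"
    by (auto intro!: derivative_eq_intros)
  show ?thesis
    unfolding chi2_loglin_cgf_deriv_def[abs_def]
    by (rule DERIV_cong[OF DERIV_add[OF DERIV_diff[OF DERIV_add[OF P DERIV_cmult[OF G]]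
          DERIV_mult[OF U L]] DERIV_cmult[OF L]]])
       (cases j, simp_all add: algebra_simps)
qed

lemma chi2_loglin_cgf_deriv_at_0:
  assumes "j \<ge> 2"
  shows "chi2_loglin_cgf_deriv \<nu> \<theta>1 \<theta>2 \<theta>3 j 0 =
           2 ^ (j - 1) * Gamma (real j - 1) * \<theta>3 ^ (j - 1) * (- real j * \<theta>2 + (real j - 1) * \<nu> * \<theta>3)
           + (-1) ^ j * \<theta>2 ^ j * Polygamma (j - 1) (\<nu> / 2)"
proof -
  obtain m where j: "j = Suc (Suc m)" using assms by (metis add_2_eq_Suc le_Suc_ex)
  have "Gamma (real j - 1) = fact m" using Gamma_fact[of m] by (simp add: j add.commute)
  thus ?thesis
    by (simp add: j chi2_loglin_cgf_deriv_def ln_Gamma_deriv_def ln_one_minus_deriv_def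
        power_minus[of \<theta>2] power_mult_distrib algebra_simps)
qed

lemma chi2_loglin_cgf_deriv_1_to_4_at_0:
  "chi2_loglin_cgf_deriv \<nu> \<theta>1 \<theta>2 \<theta>3 1 0 = \<theta>1 - \<theta>2 * ln 2 + \<nu> * \<theta>3 - \<theta>2 * Digamma (\<nu> / 2)"
  "chi2_loglin_cgf_deriv \<nu> \<theta>1 \<theta>2 \<theta>3 2 0
     = 2 * \<theta>3 * (- 2 * \<theta>2 + \<nu> * \<theta>3) + \<theta>2\<^sup>2 * Polygamma 1 (\<nu> / 2)"
  "chi2_loglin_cgf_deriv \<nu> \<theta>1 \<theta>2 \<theta>3 3 0
     = 4 * \<theta>3\<^sup>2 * (- 3 * \<theta>2 + 2 * \<nu> * \<theta>3) - \<theta>2 ^ 3 * Polygamma 2 (\<nu> / 2)"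
  "chi2_loglin_cgf_deriv \<nu> \<theta>1 \<theta>2 \<theta>3 4 0
     = 16 * \<theta>3 ^ 3 * (- 4 * \<theta>2 + 3 * \<nu> * \<theta>3) + \<theta>2 ^ 4 * Polygamma 3 (\<nu> / 2)"
  by (simp_all add: chi2_loglin_cgf_deriv_at_0 Gamma_numeral algebra_simps)
     (simp add: chi2_loglin_cgf_deriv_def ln_Gamma_deriv_def ln_one_minus_deriv_def)

lemma mgf_chi2_loglin:
  fixes Q :: "'a \<Rightarrow> real" and \<nu> \<theta>1 \<theta>2 \<theta>3 t :: real
  assumes D: "distributed M lborel Q (\<lambda>q. ennreal (chi2_density \<nu> q))"
    and "\<nu> > 0" and "\<theta>2 * t < \<nu> / 2" and "2 * \<theta>3 * t < 1"
  defines "Y \<equiv> \<lambda>\<omega>. \<theta>1 - \<theta>2 * ln (Q \<omega>) + \<theta>3 * Q \<omega>"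
  shows "integrable M (\<lambda>\<omega>. exp (t * Y \<omega>))"
    and "mgf M Y t = exp (chi2_loglin_cgf \<nu> \<theta>1 \<theta>2 \<theta>3 t)"
proof -
  define s where "s = \<nu> / 2 - \<theta>2 * t"
  have s: "s > 0" and base: "1 - 2 * \<theta>3 * t > 0" using assms(3,4) by (simp_all add: s_def)
  have exp_tY: "exp (t * Y \<omega>) = exp (t * \<theta>1) * exp (- \<theta>2 * t * ln (Q \<omega>) + \<theta>3 * t * Q \<omega>)" for \<omega>
    by (simp add: Y_def exp_add[symmetric] algebra_simps)
  note chi2 = chi2_integral_exp_ln_linear[OF D \<open>\<nu> > 0\<close>, of "- \<theta>2 * t" "\<theta>3 * t"]
  have chi2_cond: "\<nu> / 2 + - \<theta>2 * t > 0" "\<theta>3 * t < 1 / 2" using assms(3,4) by simp_all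
  show "integrable M (\<lambda>\<omega>. exp (t * Y \<omega>))"
    unfolding exp_tY using chi2(1)[OF chi2_cond] by (rule integrable_mult_right)
  have "mgf M Y t
      = exp (t * \<theta>1) * 2 powr (- \<theta>2 * t) * Gamma s / (Gamma (\<nu> / 2) * (1 - 2 * \<theta>3 * t) powr s)"
    using chi2(2)[OF chi2_cond] by (simp add: mgf_def exp_tY s_def algebra_simps)
  also have "\<dots> = exp (chi2_loglin_cgf \<nu> \<theta>1 \<theta>2 \<theta>3 t)"
    using s base \<open>\<nu> > 0\<close>
    by (simp add: chi2_loglin_cgf_def s_def Gamma_real_pos_exp powr_def exp_add[symmetric]
        exp_diff[symmetric] algebra_simps)
  finally show "mgf M Y t = exp (chi2_loglin_cgf \<nu> \<theta>1 \<theta>2 \<theta>3 t)" .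
qed

theorem mainTheorem2:
  fixes M :: "'a measure" and Q :: "'a \<Rightarrow> real"
    and \<nu> \<theta>1 \<theta>2 \<theta>3 :: real
  assumes "prob_space M"
    and "\<nu> > 0"
    and "distributed M lborel Q (\<lambda>q. ennreal (chi2_density \<nu> q))"
    and "\<theta>2 > 0" and "\<theta>3 > 0"
  defines "Y \<equiv> (\<lambda>\<omega>. \<theta>1 - \<theta>2 * ln (Q \<omega>) + \<theta>3 * Q \<omega>)"
  defines "c \<equiv> min (\<nu> / \<theta>2) (1 / \<theta>3) / 2"
  shows "(\<forall>t < c. integrable M (\<lambda>\<omega>. exp (t * Y \<omega>)))
    \<and> (\<forall>j. \<forall>t < c. (deriv ^^ j) (cgf M Y) differentiable (at t))
    \<and> cumulant M Y 1 = \<theta>1 - \<theta>2 * ln 2 + \<nu> * \<theta>3 - \<theta>2 * Digamma (\<nu> / 2)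
    \<and> (\<forall>j \<ge> 2. cumulant M Y j =
          2 ^ (j - 1) * Gamma (real j - 1) * \<theta>3 ^ (j - 1)
            * (- real j * \<theta>2 + (real j - 1) * \<nu> * \<theta>3)
          + (-1) ^ j * \<theta>2 ^ j * Polygamma (j - 1) (\<nu> / 2))
    \<and> (\<integral>\<omega>. Y \<omega> \<partial>M) = cumulant M Y 1
    \<and> (\<integral>\<omega>. (Y \<omega> - (\<integral>\<omega>'. Y \<omega>' \<partial>M))\<^sup>2 \<partial>M) = cumulant M Y 2
    \<and> cumulant M Y 2 = 2 * \<theta>3 * (- 2 * \<theta>2 + \<nu> * \<theta>3) + \<theta>2\<^sup>2 * Polygamma 1 (\<nu> / 2)
    \<and> cumulant M Y 3 = 4 * \<theta>3\<^sup>2 * (- 3 * \<theta>2 + 2 * \<nu> * \<theta>3) - \<theta>2 ^ 3 * Polygamma 2 (\<nu> / 2)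
    \<and> cumulant M Y 4 = 16 * \<theta>3 ^ 3 * (- 4 * \<theta>2 + 3 * \<nu> * \<theta>3) + \<theta>2 ^ 4 * Polygamma 3 (\<nu> / 2)"
proof -
  interpret prob_space M by fact
  let ?K = "chi2_loglin_cgf_deriv \<nu> \<theta>1 \<theta>2 \<theta>3"
  have "c > 0" using assms(2,4,5) by (simp add: c_def)
  have domain: "\<theta>2 * t < \<nu> / 2" "2 * \<theta>3 * t < 1" if "t < c" for t
  proof -
    have "t < \<nu> / \<theta>2 / 2" "t < 1 / \<theta>3 / 2" using that by (auto simp: c_def)
    thus "\<theta>2 * t < \<nu> / 2" "2 * \<theta>3 * t < 1" using assms(4,5) by (simp_all add: field_simps)
  qed
  have mgf: "integrable M (\<lambda>\<omega>. exp (t * Y \<omega>))" "mgf M Y t = exp (chi2_loglin_cgf \<nu> \<theta>1 \<theta>2 \<theta>3 t)"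
    if "t < c" for t
    using mgf_chi2_loglin[OF assms(3,2) domain[OF that]] by (simp_all add: Y_def)
  have cgf: "cgf M Y t = ?K 0 t" if "t \<in> {..<c}" for t
    using mgf(2)[of t] that by (simp add: cgf_def chi2_loglin_cgf_deriv_0)
  have K_deriv: "(?K j has_real_derivative ?K (Suc j) t) (at t)" if "t \<in> {..<c}" for j t
    using that by (intro has_real_derivative_chi2_loglin_cgf_deriv domain) auto
  have cumulant: "cumulant M Y j = ?K j 0" for j
    unfolding cumulant_def using \<open>c > 0\<close>
    by (intro higher_deriv_eq_on_open[where S = "{..<c}", OF _ cgf K_deriv]) simp_all
  have differentiable: "(deriv ^^ j) (cgf M Y) differentiable (at t)" if "t < c" for j t
    by (rule differentiableI[OF has_field_derivative_imp_has_derivative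
          [OF higher_deriv_has_derivative_on_open[where S = "{..<c}", OF _ cgf K_deriv]]])
       (use that in simp_all)
  have "Y \<in> borel_measurable M" using distributed_measurable[OF assms(3)] by (simp add: Y_def)
  moreover have "integrable M (\<lambda>\<omega>. exp (t * Y \<omega>))" if "\<bar>t\<bar> < c" for t
    using that by (intro mgf(1)) auto
  ultimately have moments: "cumulant M Y 1 = expectation Y" "cumulant M Y 2 = variance Y"
    using cumulants_1_2_eq_moments \<open>c > 0\<close> by blast+
  have "\<forall>j \<ge> 2. cumulant M Y j =
          2 ^ (j - 1) * Gamma (real j - 1) * \<theta>3 ^ (j - 1) * (- real j * \<theta>2 + (real j - 1) * \<nu> * \<theta>3)
          + (-1) ^ j * \<theta>2 ^ j * Polygamma (j - 1) (\<nu> / 2)"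
    by (simp add: cumulant chi2_loglin_cgf_deriv_at_0)
  thus ?thesis
    using mgf(1) differentiable moments[symmetric] chi2_loglin_cgf_deriv_1_to_4_at_0
    unfolding cumulant by blast
qed

end
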